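(* Let $f$ be a probability density on $\mathbb{R}^p$ with $\int_{\mathbb{R}^p}\|x\|f(x)\,dx<\infty$, let $K(x)=(2\pi)^{-p/2}e^{-\|x\|^2/2}$, $K_\epsilon(x)=\epsilon^{-p}K(x/\epsilon)$ for fixed $\epsilon>0$, $f_\epsilon=f*K_\epsilon$ with $\nabla f_\epsilon(m)=\int_{\mathbb{R}^p}\nabla K_\epsilon(m-t)f(t)\,dt$, and $\lambda>0$. Define $$h_\infty(m)=\lim_{c\to\infty}\frac{\nabla f_\epsilon(cm)-\lambda cm}{c},\qquad m\in\mathbb{R}^p.$$ Then this limit exists for every $m$, and the ODE $\dot m(t)=h_\infty(m(t))$ has the origin as its unique globally asymptotically stable equilibrium point.
   Context: The convolution is $(u*v)(x)=\int_{\mathbb{R}^p}u(x-t)v(t)\,dt$. *)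

theory Defs
  imports "HOL-Analysis.Analysis"
begin

definition gaussK :: "'a::euclidean_space \<Rightarrow> real" where
  "gaussK x = (2 * pi) powr (- real DIM('a) / 2) * exp (- ((norm x)^2) / 2)"

definition gaussK_eps :: "real \<Rightarrow> 'a::euclidean_space \<Rightarrow> real" where
  "gaussK_eps eps x = eps powr (- real DIM('a)) * gaussK (x /\<^sub>R eps)"

definition grad_K_eps :: "real \<Rightarrow> 'a::euclidean_space \<Rightarrow> 'a" where
  "grad_K_eps eps x = (THE g. GDERIV (gaussK_eps eps) x :> g)"

definition grad_f_eps :: "real \<Rightarrow> ('a::euclidean_space \<Rightarrow> real) \<Rightarrow> 'a \<Rightarrow> 'a" where
  "grad_f_eps eps f m = (\<integral>t. f t *\<^sub>R grad_K_eps eps (m - t) \<partial>lborel)"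

definition h_inf :: "real \<Rightarrow> real \<Rightarrow> ('a::euclidean_space \<Rightarrow> real) \<Rightarrow> 'a \<Rightarrow> 'a" where
  "h_inf eps lam f m =
     Lim at_top (\<lambda>c::real. (grad_f_eps eps f (c *\<^sub>R m) - (lam * c) *\<^sub>R m) /\<^sub>R c)"

definition ode_solution :: "('a::real_normed_vector \<Rightarrow> 'a) \<Rightarrow> (real \<Rightarrow> 'a) \<Rightarrow> bool" where
  "ode_solution h m \<longleftrightarrow> (\<forall>t\<ge>0. (m has_vector_derivative h (m t)) (at t within {0..}))"

definition equilibrium :: "('a::real_normed_vector \<Rightarrow> 'a) \<Rightarrow> 'a \<Rightarrow> bool" where
  "equilibrium h x \<longleftrightarrow> h x = 0"

definition lyapunov_stable :: "('a::real_normed_vector \<Rightarrow> 'a) \<Rightarrow> 'a \<Rightarrow> bool" where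
  "lyapunov_stable h x0 \<longleftrightarrow>
     (\<forall>e>0. \<exists>d>0. \<forall>m. ode_solution h m \<and> dist (m 0) x0 < d \<longrightarrow> (\<forall>t\<ge>0. dist (m t) x0 < e))"

definition globally_attractive :: "('a::real_normed_vector \<Rightarrow> 'a) \<Rightarrow> 'a \<Rightarrow> bool" where
  "globally_attractive h x0 \<longleftrightarrow> (\<forall>m. ode_solution h m \<longrightarrow> (m \<longlongrightarrow> x0) at_top)"

definition globally_asymp_stable_eq :: "('a::real_normed_vector \<Rightarrow> 'a) \<Rightarrow> 'a \<Rightarrow> bool" where
  "globally_asymp_stable_eq h x0 \<longleftrightarrow>
     equilibrium h x0 \<and> lyapunov_stable h x0 \<and> globally_attractive h x0 \<and>
     (\<forall>y. \<exists>m. ode_solution h m \<and> m 0 = y)"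

end

theory Submission
  imports Defs
begin

text \<open>The gradient of the scaled Gaussian kernel is bounded, so its convolution with a probability
  density is bounded as well. Hence the term \<open>\<nabla>f\<^sub>\<epsilon>(cm)/c\<close> vanishes as \<open>c \<rightarrow> \<infinity>\<close>
  and \<open>h\<^sub>\<infinity>(m) = -\<lambda>m\<close>. The ODE \<open>m' = -\<lambda>m\<close> has the unique solutions
  \<open>m(t) = e\<^sup>-\<^sup>\<lambda>\<^sup>t m(0)\<close>, which are norm-decreasing and tend to the origin.\<close>

lemma gderiv_unique:
  assumes "GDERIV f x :> D" and "GDERIV f x :> E"
  shows "D = E"
proof -
  have "(\<lambda>h. h \<bullet> D) = (\<lambda>h. h \<bullet> E)"
    using has_derivative_unique assms unfolding gderiv_def by blast
  then show ?thesis
    by (metis vector_eq_ldot)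
qed

lemma The_gderiv_eq:
  assumes "GDERIV f x :> D"
  shows "(THE g. GDERIV f x :> g) = D"
  using assms gderiv_unique by blast

lemma gaussK_eps_eq:
  fixes x :: "'a::euclidean_space"
  assumes "eps > 0"
  shows "gaussK_eps eps x =
    eps powr (- real DIM('a)) * (2 * pi) powr (- real DIM('a) / 2) * exp (- (x \<bullet> x) / (2 * eps\<^sup>2))"
proof -
  have "(norm (x /\<^sub>R eps))\<^sup>2 = (x \<bullet> x) / eps\<^sup>2"
    using assms by (simp add: power2_norm_eq_inner[symmetric] power_mult_distrib field_simps)
  then show ?thesis
    by (simp add: gaussK_eps_def gaussK_def)
qed

lemma grad_K_eps_eq:
  fixes x :: "'a::euclidean_space"
  assumes eps: "eps > 0"
  defines "A \<equiv> eps powr (- real DIM('a)) * (2 * pi) powr (- real DIM('a) / 2)"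
  shows "grad_K_eps eps x = (- A / eps\<^sup>2 * exp (- (x \<bullet> x) / (2 * eps\<^sup>2))) *\<^sub>R x"
  unfolding grad_K_eps_def
proof (rule The_gderiv_eq)
  have K: "gaussK_eps eps = (\<lambda>x::'a. A * exp (- (x \<bullet> x) / (2 * eps\<^sup>2)))"
    using gaussK_eps_eq[OF eps] unfolding A_def by auto
  show "GDERIV (gaussK_eps eps) x :> (- A / eps\<^sup>2 * exp (- (x \<bullet> x) / (2 * eps\<^sup>2))) *\<^sub>R x"
    unfolding K gderiv_def
    apply (rule has_derivative_eq_rhs, (rule derivative_intros)+)
    using eps apply simp
    apply (rule ext)
    subgoal for h
      using eps inner_commute[of x h] by (simp add: inner_scaleR_right power2_eq_square)
    done
qed

lemma le_exp_half_square:
  fixes a :: real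
  shows "a \<le> exp (a\<^sup>2 / 2)"
proof -
  have "a \<le> 1 + a\<^sup>2 / 2"
    using zero_le_power2[of "a - 1"] by (simp add: power2_diff)
  also have "\<dots> \<le> exp (a\<^sup>2 / 2)"
    by (rule exp_ge_add_one_self)
  finally show ?thesis .
qed

lemma mult_exp_neg_square_le:
  fixes r eps :: real
  assumes "eps > 0"
  shows "r * exp (- (r\<^sup>2) / (2 * eps\<^sup>2)) \<le> eps"
proof -
  have "r / eps \<le> exp (r\<^sup>2 / (2 * eps\<^sup>2))"
    using le_exp_half_square[of "r / eps"] by (simp add: power_divide mult.commute)
  then have "r \<le> eps * exp (r\<^sup>2 / (2 * eps\<^sup>2))"
    using assms by (simp add: divide_le_eq mult.commute)
  then show ?thesis
    by (simp add: pos_le_divide_eq exp_minus field_simps)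
qed

lemma norm_grad_K_eps_le:
  fixes x :: "'a::euclidean_space"
  assumes eps: "eps > 0"
  shows "norm (grad_K_eps eps x) \<le> eps powr (- real DIM('a)) * (2 * pi) powr (- real DIM('a) / 2) / eps"
    (is "_ \<le> ?A / eps")
proof -
  have A: "?A > 0"
    using eps by simp
  have "norm (grad_K_eps eps x) = ?A / eps\<^sup>2 * (norm x * exp (- (norm x)\<^sup>2 / (2 * eps\<^sup>2)))"
    unfolding grad_K_eps_eq[OF eps] using A eps by (simp add: power2_norm_eq_inner abs_mult)
  also have "\<dots> \<le> ?A / eps\<^sup>2 * eps"
    using mult_exp_neg_square_le[OF eps] A eps by (intro mult_left_mono) auto
  also have "\<dots> = ?A / eps"
    using eps by (simp add: power2_eq_square)
  finally show ?thesis .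
qed

lemma grad_K_eps_borel_measurable:
  assumes "eps > 0"
  shows "(grad_K_eps eps :: 'a::euclidean_space \<Rightarrow> 'a) \<in> borel_measurable borel"
  unfolding grad_K_eps_eq[OF assms, abs_def] using assms
  by (intro borel_measurable_continuous_onI continuous_intros) auto

lemma norm_convolution_le:
  fixes f :: "'a::euclidean_space \<Rightarrow> real"
    and g :: "'a \<Rightarrow> 'b::{banach, second_countable_topology}"
  assumes f_nonneg: "\<And>x. f x \<ge> 0" and f_int: "integrable lborel f"
    and g_meas: "g \<in> borel_measurable borel" and g_bound: "\<And>x. norm (g x) \<le> B"
  shows "norm (\<integral>t. f t *\<^sub>R g (m - t) \<partial>lborel) \<le> B * (\<integral>t. f t \<partial>lborel)"
proof -
  have bound: "norm (f t *\<^sub>R g (m - t)) \<le> B * f t" for t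
    using mult_right_mono[OF g_bound[of "m - t"] f_nonneg[of t]] f_nonneg[of t] by (simp add: mult.commute)
  have "(\<lambda>t. g (m - t)) \<in> borel_measurable lborel"
    using measurable_compose[OF _ g_meas, of "\<lambda>t. m - t" lborel] by auto
  then have meas: "(\<lambda>t. f t *\<^sub>R g (m - t)) \<in> borel_measurable lborel"
    using f_int by measurable
  have int_bound: "integrable lborel (\<lambda>t. B * f t)"
    using f_int by auto
  have "integrable lborel (\<lambda>t. f t *\<^sub>R g (m - t))"
    by (rule Bochner_Integration.integrable_bound[OF int_bound meas])
      (rule AE_I2, rule order_trans[OF bound], simp)
  then have "norm (\<integral>t. f t *\<^sub>R g (m - t) \<partial>lborel) \<le> (\<integral>t. B * f t \<partial>lborel)"
    using int_bound bound by (rule Bochner_Integration.integral_norm_bound_integral)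
  then show ?thesis
    by simp
qed

lemma norm_grad_f_eps_le:
  fixes f :: "'a::euclidean_space \<Rightarrow> real"
  assumes "\<And>x. f x \<ge> 0" and "integrable lborel f" and "(\<integral>x. f x \<partial>lborel) = 1" and eps: "eps > 0"
  shows "norm (grad_f_eps eps f m) \<le> eps powr (- real DIM('a)) * (2 * pi) powr (- real DIM('a) / 2) / eps"
  using norm_convolution_le[OF assms(1,2) grad_K_eps_borel_measurable[OF eps] norm_grad_K_eps_le[OF eps]] assms(3)
  unfolding grad_f_eps_def by simp

lemma tendsto_bounded_minus_linear_over_scale:
  fixes F :: "'a::real_normed_vector \<Rightarrow> 'a"
  assumes bound: "\<And>x. norm (F x) \<le> B"
  shows "((\<lambda>c::real. (F (c *\<^sub>R m) - (lam * c) *\<^sub>R m) /\<^sub>R c) \<longlongrightarrow> - lam *\<^sub>R m) at_top"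
proof -
  have "((\<lambda>c::real. F (c *\<^sub>R m) /\<^sub>R c) \<longlongrightarrow> 0) at_top"
  proof (rule Lim_null_comparison)
    show "\<forall>\<^sub>F c in at_top. norm (F (c *\<^sub>R m) /\<^sub>R c) \<le> B / c"
      using eventually_gt_at_top[of "0::real"]
      by eventually_elim (simp add: bound divide_right_mono divide_inverse_commute[symmetric])
    show "((\<lambda>c. B / c) \<longlongrightarrow> 0) at_top"
      by (intro tendsto_divide_0[OF tendsto_const] filterlim_at_top_imp_at_infinity filterlim_ident)
  qed
  then have "((\<lambda>c::real. F (c *\<^sub>R m) /\<^sub>R c - lam *\<^sub>R m) \<longlongrightarrow> - lam *\<^sub>R m) at_top"
    using tendsto_diff[OF _ tendsto_const, of _ 0 at_top "lam *\<^sub>R m"] by simp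
  then show ?thesis
    by (rule Lim_transform_eventually)
      (use eventually_gt_at_top[of "0::real"] in \<open>eventually_elim, simp add: scaleR_diff_right\<close>)
qed

lemma ode_solution_linear_eq:
  fixes m :: "real \<Rightarrow> 'a::real_normed_vector"
  assumes sol: "ode_solution (\<lambda>x. - lam *\<^sub>R x) m" and t: "t \<ge> 0"
  shows "m t = exp (- (lam * t)) *\<^sub>R m 0"
proof -
  define g where "g s = exp (lam * s) *\<^sub>R m s" for s
  have "(g has_derivative (\<lambda>h. 0)) (at s within {0..})" if s: "s \<in> {0..}" for s
  proof -
    have "(m has_vector_derivative (- lam *\<^sub>R m s)) (at s within {0..})"
      using sol s unfolding ode_solution_def by auto
    then have "(g has_vector_derivative
        exp (lam * s) *\<^sub>R (- lam *\<^sub>R m s) + (exp (lam * s) * lam) *\<^sub>R m s) (at s within {0..})"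
      unfolding g_def by (intro has_vector_derivative_scaleR derivative_eq_intros) auto
    then show ?thesis
      by (simp add: has_vector_derivative_def mult.commute)
  qed
  then have "g t = g 0"
    using has_derivative_zero_constant[of "{0::real..}" g] t by (force simp: convex_real_interval)
  then have "exp (- (lam * t)) *\<^sub>R (exp (lam * t) *\<^sub>R m t) = exp (- (lam * t)) *\<^sub>R m 0"
    by (simp add: g_def)
  then show ?thesis
    by (simp add: exp_minus)
qed

lemma ode_solution_linear_exp:
  fixes y :: "'a::real_normed_vector"
  shows "ode_solution (\<lambda>x. - lam *\<^sub>R x) (\<lambda>t. exp (- (lam * t)) *\<^sub>R y)"
  unfolding ode_solution_def
  by (auto intro!: derivative_eq_intros simp: has_vector_derivative_def algebra_simps)

lemma globally_asymp_stable_linear: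
  assumes lam: "lam > 0"
  shows "globally_asymp_stable_eq (\<lambda>x::'a::real_normed_vector. - lam *\<^sub>R x) 0"
proof -
  have decay: "norm (m t) \<le> norm (m 0)" if "ode_solution (\<lambda>x. - lam *\<^sub>R x) m" "t \<ge> 0"
    for m :: "real \<Rightarrow> 'a" and t
    using ode_solution_linear_eq[OF that] lam that(2) by (simp add: mult_left_le_one_le)
  have "lyapunov_stable (\<lambda>x::'a. - lam *\<^sub>R x) 0"
    unfolding lyapunov_stable_def
  proof (intro allI impI exI conjI)
    fix e :: real and m :: "real \<Rightarrow> 'a" and t :: real
    assume "e > 0"
    then show "e > 0" .
    assume "ode_solution (\<lambda>x. - lam *\<^sub>R x) m \<and> dist (m 0) 0 < e" and "t \<ge> 0"
    then show "dist (m t) 0 < e"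
      using decay[of m t] by simp
  qed
  moreover have "globally_attractive (\<lambda>x::'a. - lam *\<^sub>R x) 0"
    unfolding globally_attractive_def
  proof (intro allI impI)
    fix m :: "real \<Rightarrow> 'a"
    assume sol: "ode_solution (\<lambda>x. - lam *\<^sub>R x) m"
    have "((\<lambda>t. exp (- (lam * t))) \<longlongrightarrow> 0) at_top"
    proof -
      have "filterlim (\<lambda>t. lam * t) at_top at_top"
        by (rule filterlim_tendsto_pos_mult_at_top[OF tendsto_const lam filterlim_ident])
      then have "filterlim (\<lambda>t. - (lam * t)) at_bot at_top"
        by (simp add: filterlim_uminus_at_bot)
      then show ?thesis
        by (rule filterlim_compose[OF exp_at_bot])
    qed
    then have "((\<lambda>t. exp (- (lam * t)) *\<^sub>R m 0) \<longlongrightarrow> 0 *\<^sub>R m 0) at_top"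
      by (intro tendsto_scaleR tendsto_const)
    then have "((\<lambda>t. exp (- (lam * t)) *\<^sub>R m 0) \<longlongrightarrow> 0) at_top"
      by simp
    moreover have "\<forall>\<^sub>F t in at_top. exp (- (lam * t)) *\<^sub>R m 0 = m t"
      using eventually_ge_at_top[of "0::real"]
      by eventually_elim (rule ode_solution_linear_eq[OF sol, symmetric])
    ultimately show "(m \<longlongrightarrow> 0) at_top"
      by (rule Lim_transform_eventually)
  qed
  moreover have "\<exists>m. ode_solution (\<lambda>x::'a. - lam *\<^sub>R x) m \<and> m 0 = y" for y
    using ode_solution_linear_exp[of lam y] by (intro exI[of _ "\<lambda>t. exp (- (lam * t)) *\<^sub>R y"]) simp
  ultimately show ?thesis
    unfolding globally_asymp_stable_eq_def equilibrium_def using scaleR_zero_right by blast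
qed

theorem proposition3:
  fixes f :: "'a::euclidean_space \<Rightarrow> real" and eps lam :: real
  assumes f_nonneg: "\<And>x. f x \<ge> 0"
    and f_int: "integrable lborel f"
    and f_total: "(\<integral>x. f x \<partial>lborel) = 1"
    and f_moment: "integrable lborel (\<lambda>x. norm x * f x)"
    and eps_pos: "eps > 0"
    and lam_pos: "lam > 0"
  shows "(\<forall>m::'a. \<exists>L. ((\<lambda>c::real. (grad_f_eps eps f (c *\<^sub>R m) - (lam * c) *\<^sub>R m) /\<^sub>R c)
                          \<longlongrightarrow> L) at_top)
       \<and> globally_asymp_stable_eq (h_inf eps lam f) 0
       \<and> (\<forall>x. equilibrium (h_inf eps lam f) x \<longrightarrow> x = 0)"
proof -
  have lim: "((\<lambda>c::real. (grad_f_eps eps f (c *\<^sub>R m) - (lam * c) *\<^sub>R m) /\<^sub>R c) \<longlongrightarrow> - lam *\<^sub>R m) at_top"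
    for m :: 'a
    by (rule tendsto_bounded_minus_linear_over_scale)
      (rule norm_grad_f_eps_le[OF f_nonneg f_int f_total eps_pos])
  then have h: "h_inf eps lam f = (\<lambda>m. - lam *\<^sub>R m)"
    unfolding h_inf_def by (intro ext tendsto_Lim) simp_all
  have "globally_asymp_stable_eq (h_inf eps lam f) 0"
    unfolding h by (rule globally_asymp_stable_linear[OF lam_pos])
  moreover have "\<forall>x. equilibrium (h_inf eps lam f) x \<longrightarrow> x = 0"
    unfolding h equilibrium_def using lam_pos by simp
  ultimately show ?thesis
    using lim by blast
qed

end
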